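(* Let $k,l\ge1$ with $k\ne l$, $1\le r\le(2k+1)(2l+1)$, $\mathcal{B}=\mathcal{B}(2k+1,2l+1;r)$ and $G=\langle H,V\rangle$. Then \[|\mathcal{O}_G(\mathcal{B})|=\frac14\left(\binom{(2k+1)(2l+1)}{r}+\binom{2kl+k+l}{\lfloor\frac r2\rfloor}+\sum_{t=0}^{r}\binom{2k+1}{t}\binom{2kl+l}{\frac{r-t}{2}}+\sum_{t=0}^{r}\binom{2l+1}{t}\binom{2kl+k}{\frac{r-t}{2}}\right).\]
   Context: $\mathcal{B}(2k+1,2l+1;r)$ is the set of all subsets of exactly $r$ cells (boards with $r$ blocked cells) of a grid with $2k+1$ rows and $2l+1$ columns. $\langle H,V\rangle=\{R_0,H,V,R_{180}\}$ is the group generated by the reflections $H$, $V$ across the horizontal and vertical midlines (with $R_{180}$ the 180-degree rotation), acting on boards; $\mathcal{O}_G(\mathcal{B})$ is the set of orbits. Convention: $\binom{a}{b}=0$ when $b$ is not a nonnegative integer or $b>a$. *)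

theory Defs
  imports Complex_Main
begin

definition grid :: "nat \<Rightarrow> nat \<Rightarrow> (nat \<times> nat) set" where
  "grid k l = {0..<2*k+1} \<times> {0..<2*l+1}"

definition boards :: "nat \<Rightarrow> nat \<Rightarrow> nat \<Rightarrow> (nat \<times> nat) set set" where
  "boards k l r = {B. B \<subseteq> grid k l \<and> card B = r}"

definition reflH :: "nat \<Rightarrow> nat \<Rightarrow> nat \<times> nat \<Rightarrow> nat \<times> nat" where
  "reflH k l = (\<lambda>(i, j). (2*k - i, j))"

definition reflV :: "nat \<Rightarrow> nat \<Rightarrow> nat \<times> nat \<Rightarrow> nat \<times> nat" where
  "reflV k l = (\<lambda>(i, j). (i, 2*l - j))"

definition groupHV :: "nat \<Rightarrow> nat \<Rightarrow> (nat \<times> nat \<Rightarrow> nat \<times> nat) set" where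
  "groupHV k l = {id, reflH k l, reflV k l, reflH k l \<circ> reflV k l}"

definition orbitHV :: "nat \<Rightarrow> nat \<Rightarrow> (nat \<times> nat) set \<Rightarrow> (nat \<times> nat) set set" where
  "orbitHV k l B = {g ` B | g. g \<in> groupHV k l}"

definition orbitsHV :: "nat \<Rightarrow> nat \<Rightarrow> nat \<Rightarrow> (nat \<times> nat) set set set" where
  "orbitsHV k l r = orbitHV k l ` boards k l r"

(* binomial a choose (m/2), with the convention that it is 0 when m/2 is not an integer *)
definition choose_half :: "nat \<Rightarrow> nat \<Rightarrow> nat" where
  "choose_half a m = (if even m then a choose (m div 2) else 0)"

end

(* Burnside's lemma for G = {id, H, V, R_180}: four times the number of orbits is the
   total number of boards fixed by the four elements.  The identity fixes all of them.
   Each other element is an involution of the grid, and a board is invariant under an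
   involution iff it consists of some fixed cells together with whole 2-cycles; choosing
   t fixed cells and (r - t)/2 of the 2-cycles gives the sums.  H and V fix a middle
   row resp. column, R_180 fixes only the centre, so its sum has just the terms t = 0, 1
   and collapses to a single binomial. *)

theory Submission
  imports Defs "HOL-Algebra.Group_Action"
begin

lemma card_subsets_with_double_card:
  assumes "finite A"
  shows "card {T. T \<subseteq> A \<and> 2 * card T = m} = choose_half (card A) m"
proof (cases "even m")
  case True
  then have "{T. T \<subseteq> A \<and> 2 * card T = m} = {T. T \<subseteq> A \<and> card T = m div 2}"
    by auto
  then show ?thesis
    using True assms by (simp add: n_subsets choose_half_def)
next
  case False
  then have no_subsets: "{T. T \<subseteq> A \<and> 2 * card T = m} = {}"
    by auto
  show ?thesis
    unfolding no_subsets using False by (simp add: choose_half_def)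
qed

lemma card_subset_pairs_weighted:
  assumes "finite F" and "finite A"
  shows "card {(M, T). M \<subseteq> F \<and> T \<subseteq> A \<and> card M + 2 * card T = r}
    = (\<Sum>t=0..r. (card F choose t) * choose_half (card A) (r - t))"
proof -
  have "{(M, T). M \<subseteq> F \<and> T \<subseteq> A \<and> card M + 2 * card T = r}
    = (\<Union>t\<in>{0..r}. {M. M \<subseteq> F \<and> card M = t} \<times> {T. T \<subseteq> A \<and> 2 * card T = r - t})"
    by auto
  also have "card \<dots>
      = (\<Sum>t=0..r. card ({M. M \<subseteq> F \<and> card M = t} \<times> {T. T \<subseteq> A \<and> 2 * card T = r - t}))"
    by (rule card_UN_disjoint) (use assms in auto)
  also have "\<dots> = (\<Sum>t=0..r. (card F choose t) * choose_half (card A) (r - t))"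
    using assms by (simp add: card_cartesian_product n_subsets card_subsets_with_double_card)
  finally show ?thesis .
qed

lemma sum_choose_one_choose_half:
  "(\<Sum>t=0..r. (1 choose t) * choose_half m (r - t)) = m choose (r div 2)"
proof (cases r)
  case 0
  then show ?thesis by (simp add: choose_half_def)
next
  case (Suc s)
  have "(\<Sum>t=0..r. (1 choose t) * choose_half m (r - t))
      = (\<Sum>t\<in>{0,1}. (1 choose t) * choose_half m (r - t))"
    by (rule sum.mono_neutral_right) (use Suc in auto)
  also have "\<dots> = choose_half m (Suc s) + choose_half m s"
    using Suc by simp
  also have "\<dots> = m choose (r div 2)"
    using Suc by (auto simp: choose_half_def elim: oddE)
  finally show ?thesis .
qed

locale involution_transversal =
  fixes S :: "'a set" and \<sigma> :: "'a \<Rightarrow> 'a" and F A :: "'a set"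
  assumes finite_S: "finite S"
    and maps_to: "x \<in> S \<Longrightarrow> \<sigma> x \<in> S"
    and involutive: "x \<in> S \<Longrightarrow> \<sigma> (\<sigma> x) = x"
    and fixed_subset: "F \<subseteq> S"
    and fixed: "x \<in> F \<Longrightarrow> \<sigma> x = x"
    and transversal_subset: "A \<subseteq> S"
    and fixed_transversal_disjoint: "F \<inter> A = {}"
    and transversal_swapped: "x \<in> A \<Longrightarrow> \<sigma> x \<notin> A"
    and covers: "x \<in> S \<Longrightarrow> x \<in> F \<or> x \<in> A \<or> \<sigma> x \<in> A"
begin

lemma swapped_not_fixed: "x \<in> A \<Longrightarrow> \<sigma> x \<notin> F"
  by (metis fixed involutive fixed_transversal_disjoint disjoint_iff subsetD transversal_subset)

lemma inj_on_transversal: "inj_on \<sigma> A"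
  by (metis inj_onI involutive subsetD transversal_subset)

lemma card_union_orbits:
  assumes "M \<subseteq> F" and "T \<subseteq> A"
  shows "card (M \<union> T \<union> \<sigma> ` T) = card M + 2 * card T"
proof -
  have "finite M" and "finite T"
    using assms fixed_subset transversal_subset finite_subset[OF _ finite_S] by blast+
  moreover have "M \<inter> T = {}" and "(M \<union> T) \<inter> \<sigma> ` T = {}"
    using assms fixed_transversal_disjoint swapped_not_fixed transversal_swapped by blast+
  moreover have "card (\<sigma> ` T) = card T"
    using assms inj_on_transversal by (auto intro: card_image inj_on_subset)
  ultimately show ?thesis
    by (simp add: card_Un_disjoint)
qed

lemma invariant_subset_eq:
  assumes "B \<subseteq> S" and "\<sigma> ` B = B"
  shows "B = (B \<inter> F) \<union> (B \<inter> A) \<union> \<sigma> ` (B \<inter> A)"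
proof
  show "B \<subseteq> (B \<inter> F) \<union> (B \<inter> A) \<union> \<sigma> ` (B \<inter> A)"
  proof
    fix x assume "x \<in> B"
    have "x \<in> S" and "\<sigma> x \<in> B"
      using assms \<open>x \<in> B\<close> by auto
    from covers[OF \<open>x \<in> S\<close>]
    show "x \<in> (B \<inter> F) \<union> (B \<inter> A) \<union> \<sigma> ` (B \<inter> A)"
    proof (elim disjE)
      assume "\<sigma> x \<in> A"
      then have "\<sigma> (\<sigma> x) \<in> \<sigma> ` (B \<inter> A)"
        using \<open>\<sigma> x \<in> B\<close> by blast
      then show ?thesis
        using involutive[OF \<open>x \<in> S\<close>] by simp
    qed (use \<open>x \<in> B\<close> in blast)+
  qed
  show "(B \<inter> F) \<union> (B \<inter> A) \<union> \<sigma> ` (B \<inter> A) \<subseteq> B"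
    using assms(2) by auto
qed

lemma union_orbits_invariant:
  assumes "M \<subseteq> F" and "T \<subseteq> A"
  shows "\<sigma> ` (M \<union> T \<union> \<sigma> ` T) = M \<union> T \<union> \<sigma> ` T"
proof -
  have "\<sigma> ` M = M"
    using assms fixed by (simp add: subset_iff)
  moreover have "\<sigma> ` \<sigma> ` T = T"
    using assms involutive transversal_subset by (force simp: image_image)
  ultimately show ?thesis
    by (auto simp: image_Un)
qed

lemma bij_betw_invariant_subsets:
  "bij_betw (\<lambda>(M, T). M \<union> T \<union> \<sigma> ` T)
     {(M, T). M \<subseteq> F \<and> T \<subseteq> A \<and> card M + 2 * card T = r}
     {B. B \<subseteq> S \<and> card B = r \<and> \<sigma> ` B = B}"
proof (rule bij_betw_byWitness[where f' = "\<lambda>B. (B \<inter> F, B \<inter> A)"]; clarify)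
  fix M T assume "M \<subseteq> F" "T \<subseteq> A"
  then show "(M \<union> T \<union> \<sigma> ` T) \<inter> F = M \<and> (M \<union> T \<union> \<sigma> ` T) \<inter> A = T"
    using fixed_transversal_disjoint swapped_not_fixed transversal_swapped by blast
next
  fix B assume "B \<subseteq> S" "\<sigma> ` B = B"
  then show "B \<inter> F \<union> B \<inter> A \<union> \<sigma> ` (B \<inter> A) = B"
    by (rule invariant_subset_eq[symmetric])
next
  fix M T assume MT: "M \<subseteq> F" "T \<subseteq> A"
  show "M \<union> T \<union> \<sigma> ` T \<subseteq> S \<and> card (M \<union> T \<union> \<sigma> ` T) = card M + 2 * card T
      \<and> \<sigma> ` (M \<union> T \<union> \<sigma> ` T) = M \<union> T \<union> \<sigma> ` T"
  proof (intro conjI)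
    show "M \<union> T \<union> \<sigma> ` T \<subseteq> S"
      using MT fixed_subset transversal_subset maps_to by blast
  qed (use MT card_union_orbits union_orbits_invariant in simp_all)
next
  fix B assume "B \<subseteq> S" "\<sigma> ` B = B"
  then have "card B = card (B \<inter> F) + 2 * card (B \<inter> A)"
    using invariant_subset_eq card_union_orbits[of "B \<inter> F" "B \<inter> A"] by simp
  then show "B \<inter> F \<subseteq> F \<and> B \<inter> A \<subseteq> A \<and> card (B \<inter> F) + 2 * card (B \<inter> A) = card B"
    by simp
qed

theorem card_invariant_subsets:
  "card {B. B \<subseteq> S \<and> card B = r \<and> \<sigma> ` B = B}
    = (\<Sum>t=0..r. (card F choose t) * choose_half (card A) (r - t))"
proof -
  have "finite F" and "finite A"
    using fixed_subset transversal_subset finite_subset[OF _ finite_S] by blast+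
  have "card {B. B \<subseteq> S \<and> card B = r \<and> \<sigma> ` B = B}
      = card {(M, T). M \<subseteq> F \<and> T \<subseteq> A \<and> card M + 2 * card T = r}"
    by (rule bij_betw_same_card[OF bij_betw_invariant_subsets, symmetric])
  also have "\<dots> = (\<Sum>t=0..r. (card F choose t) * choose_half (card A) (r - t))"
    using \<open>finite F\<close> \<open>finite A\<close> by (rule card_subset_pairs_weighted)
  finally show ?thesis .
qed

end

lemma bij_betw_image_card_subsets:
  assumes "bij_betw g S S"
  shows "bij_betw (image g) {B. B \<subseteq> S \<and> card B = r} {B. B \<subseteq> S \<and> card B = r}"
proof (rule bij_betw_subset[OF bij_betw_image_Pow[OF assms]])
  have inj: "inj_on g S"
    using assms by (rule bij_betw_imp_inj_on)
  show "image g ` {B. B \<subseteq> S \<and> card B = r} = {B. B \<subseteq> S \<and> card B = r}"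
  proof (intro equalityI subsetI)
    fix B assume "B \<in> image g ` {B. B \<subseteq> S \<and> card B = r}"
    then show "B \<in> {B. B \<subseteq> S \<and> card B = r}"
      using inj assms by (auto simp: bij_betw_def card_image inj_on_subset)
  next
    fix B assume B: "B \<in> {B. B \<subseteq> S \<and> card B = r}"
    define X where "X = inv_into S g ` B"
    have "X \<subseteq> S" and "g ` X = B"
      using B assms by (auto simp: X_def bij_betw_def inv_into_into image_inv_into_cancel)
    moreover have "card X = r"
      using card_image[OF inj_on_subset[OF inj \<open>X \<subseteq> S\<close>]] \<open>g ` X = B\<close> B by simp
    ultimately show "B \<in> image g ` {B. B \<subseteq> S \<and> card B = r}"
      by blast
  qed
qed auto

definition subset_image_action :: "'a set \<Rightarrow> nat \<Rightarrow> ('a \<Rightarrow> 'a) \<Rightarrow> 'a set \<Rightarrow> 'a set" where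
  "subset_image_action S r g = (\<lambda>B \<in> {B. B \<subseteq> S \<and> card B = r}. g ` B)"

lemma group_action_subset_image:
  "group_action (BijGroup S) {B. B \<subseteq> S \<and> card B = r} (subset_image_action S r)"
proof -
  let ?E = "{B. B \<subseteq> S \<and> card B = r}"
  have closed: "subset_image_action S r g \<in> Bij ?E" if "g \<in> Bij S" for g
    using bij_betw_image_card_subsets[of g S r] that
    by (simp add: subset_image_action_def Bij_def)
  have mult: "subset_image_action S r (compose S g h)
      = compose ?E (subset_image_action S r g) (subset_image_action S r h)"
    if "h \<in> Bij S" for g h
    unfolding subset_image_action_def compose_def
  proof (rule restrict_ext)
    fix B assume B: "B \<in> ?E"
    have "h ` B \<in> ?E"
      using that bij_betw_apply[OF bij_betw_image_card_subsets B] by (simp add: Bij_def)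
    then show "(\<lambda>x\<in>S. g (h x)) ` B = (\<lambda>B\<in>?E. g ` B) ((\<lambda>B\<in>?E. h ` B) B)"
      using B by (auto simp: image_image subset_iff)
  qed
  show ?thesis
    unfolding group_action_def group_hom_def group_hom_axioms_def
  proof (intro conjI group_BijGroup homI)
    show "subset_image_action S r g \<in> carrier (BijGroup ?E)" if "g \<in> carrier (BijGroup S)" for g
      using closed that by (simp add: BijGroup_def)
    show "subset_image_action S r (g \<otimes>\<^bsub>BijGroup S\<^esub> h)
        = subset_image_action S r g \<otimes>\<^bsub>BijGroup ?E\<^esub> subset_image_action S r h"
      if "g \<in> carrier (BijGroup S)" and "h \<in> carrier (BijGroup S)" for g h
      using that mult closed by (simp add: BijGroup_def compose_Bij)
  qed
qed

lemma reflH_in_grid: "x \<in> grid k l \<Longrightarrow> reflH k l x \<in> grid k l"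
  by (auto simp: grid_def reflH_def)

lemma reflV_in_grid: "x \<in> grid k l \<Longrightarrow> reflV k l x \<in> grid k l"
  by (auto simp: grid_def reflV_def)

lemma reflH_reflH: "x \<in> grid k l \<Longrightarrow> reflH k l (reflH k l x) = x"
  by (auto simp: grid_def reflH_def)

lemma reflV_reflV: "x \<in> grid k l \<Longrightarrow> reflV k l (reflV k l x) = x"
  by (auto simp: grid_def reflV_def)

lemma reflV_reflH: "reflV k l (reflH k l x) = reflH k l (reflV k l x)"
  by (simp add: reflH_def reflV_def split: prod.split)

lemmas grid_reflection_simps = reflH_in_grid reflV_in_grid reflH_reflH reflV_reflV reflV_reflH

lemma groupHV_in_grid: "g \<in> groupHV k l \<Longrightarrow> x \<in> grid k l \<Longrightarrow> g x \<in> grid k l"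
  by (auto simp: groupHV_def grid_reflection_simps)

lemma groupHV_involutive: "g \<in> groupHV k l \<Longrightarrow> x \<in> grid k l \<Longrightarrow> g (g x) = x"
  by (auto simp: groupHV_def grid_reflection_simps)

lemma groupHV_comp_closed:
  assumes "g \<in> groupHV k l" and "h \<in> groupHV k l"
  shows "\<exists>f \<in> groupHV k l. \<forall>x \<in> grid k l. g (h x) = f x"
  using assms by (auto simp: groupHV_def grid_reflection_simps)

lemma distinct_groupHV_at_origin:
  assumes "k \<ge> 1" and "l \<ge> 1"
  shows "distinct (map (\<lambda>g. g (0, 0)) [id, reflH k l, reflV k l, reflH k l \<circ> reflV k l])"
  using assms by (simp add: reflH_def reflV_def)

(* On all of nat \<times> nat the reflections are not bijective (truncated subtraction), so G is
   realised as a group of permutations of the grid by restricting its elements. *)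
definition groupHV_on_grid :: "nat \<Rightarrow> nat \<Rightarrow> (nat \<times> nat \<Rightarrow> nat \<times> nat) set" where
  "groupHV_on_grid k l = (\<lambda>g. restrict g (grid k l)) ` groupHV k l"

lemma restrict_groupHV_Bij: "g \<in> groupHV k l \<Longrightarrow> restrict g (grid k l) \<in> Bij (grid k l)"
  unfolding Bij_def
  by (auto intro!: bij_betw_byWitness[where f' = g] simp: groupHV_in_grid groupHV_involutive)

lemma restrict_groupHV_mult:
  assumes "g \<in> groupHV k l" and "h \<in> groupHV k l"
  shows "restrict g (grid k l) \<otimes>\<^bsub>BijGroup (grid k l)\<^esub> restrict h (grid k l)
    = restrict (g \<circ> h) (grid k l)"
  using assms restrict_groupHV_Bij[OF assms(1)] restrict_groupHV_Bij[OF assms(2)]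
  by (auto simp: BijGroup_def compose_def groupHV_in_grid intro!: restrict_ext)

lemma subgroup_groupHV_on_grid: "subgroup (groupHV_on_grid k l) (BijGroup (grid k l))"
proof (rule group.subgroupI[OF group_BijGroup])
  show "groupHV_on_grid k l \<subseteq> carrier (BijGroup (grid k l))"
    by (auto simp: groupHV_on_grid_def BijGroup_def restrict_groupHV_Bij)
  show "groupHV_on_grid k l \<noteq> {}"
    by (simp add: groupHV_on_grid_def groupHV_def)
next
  fix a assume "a \<in> groupHV_on_grid k l"
  then obtain g where g: "g \<in> groupHV k l" and a: "a = restrict g (grid k l)"
    by (auto simp: groupHV_on_grid_def)
  have "a \<otimes>\<^bsub>BijGroup (grid k l)\<^esub> a = \<one>\<^bsub>BijGroup (grid k l)\<^esub>"
    unfolding a restrict_groupHV_mult[OF g g]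
    by (auto simp: BijGroup_def groupHV_involutive[OF g] intro!: restrict_ext)
  moreover have "a \<in> carrier (BijGroup (grid k l))"
    using restrict_groupHV_Bij[OF g] a by (simp add: BijGroup_def)
  ultimately have "inv\<^bsub>BijGroup (grid k l)\<^esub> a = a"
    using group.inv_equality[OF group_BijGroup] by blast
  then show "inv\<^bsub>BijGroup (grid k l)\<^esub> a \<in> groupHV_on_grid k l"
    using \<open>a \<in> groupHV_on_grid k l\<close> by simp
next
  fix a b assume "a \<in> groupHV_on_grid k l" and "b \<in> groupHV_on_grid k l"
  then obtain g h where g: "g \<in> groupHV k l" and h: "h \<in> groupHV k l"
    and a: "a = restrict g (grid k l)" and b: "b = restrict h (grid k l)"
    by (auto simp: groupHV_on_grid_def)
  obtain f where f: "f \<in> groupHV k l" and gh: "\<forall>x \<in> grid k l. g (h x) = f x"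
    using groupHV_comp_closed[OF g h] by blast
  have "a \<otimes>\<^bsub>BijGroup (grid k l)\<^esub> b = restrict f (grid k l)"
    unfolding a b restrict_groupHV_mult[OF g h] using gh by (auto intro: restrict_ext)
  then show "a \<otimes>\<^bsub>BijGroup (grid k l)\<^esub> b \<in> groupHV_on_grid k l"
    using f by (simp add: groupHV_on_grid_def)
qed

lemma distinct_groupHV:
  assumes "k \<ge> 1" and "l \<ge> 1"
  shows "distinct [id, reflH k l, reflV k l, reflH k l \<circ> reflV k l]"
  using distinct_groupHV_at_origin[OF assms] by (simp only: distinct_map)

lemma sum_groupHV:
  assumes "k \<ge> 1" and "l \<ge> 1"
  shows "(\<Sum>g\<in>groupHV k l. f g) = f id + f (reflH k l) + f (reflV k l) + f (reflH k l \<circ> reflV k l)"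
  using sum.distinct_set_conv_list[OF distinct_groupHV[OF assms], of f]
  by (simp add: groupHV_def add.assoc)

lemma inj_on_restrict_groupHV:
  assumes "k \<ge> 1" and "l \<ge> 1"
  shows "inj_on (\<lambda>g. restrict g (grid k l)) (groupHV k l)"
proof -
  have "inj_on (\<lambda>g. g (0, 0)) (groupHV k l)"
    using distinct_groupHV_at_origin[OF assms] by (simp only: distinct_map groupHV_def set_simps)
  moreover have "(0, 0) \<in> grid k l"
    by (simp add: grid_def)
  ultimately show ?thesis
    unfolding inj_on_def by (metis restrict_apply')
qed

lemma card_groupHV_on_grid:
  assumes "k \<ge> 1" and "l \<ge> 1"
  shows "card (groupHV_on_grid k l) = 4"
  unfolding groupHV_on_grid_def card_image[OF inj_on_restrict_groupHV[OF assms]]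
  using distinct_card[OF distinct_groupHV[OF assms]] by (simp add: groupHV_def)

lemma image_restrict_subset: "B \<subseteq> A \<Longrightarrow> restrict f A ` B = f ` B"
  by (rule image_cong) auto

lemma orbitsHV_eq_orbits:
  "orbitsHV k l r = orbits (BijGroup (grid k l)\<lparr>carrier := groupHV_on_grid k l\<rparr>)
     (boards k l r) (subset_image_action (grid k l) r)"
proof -
  have "orbit (BijGroup (grid k l)\<lparr>carrier := groupHV_on_grid k l\<rparr>)
      (subset_image_action (grid k l) r) B = orbitHV k l B" if "B \<in> boards k l r" for B
  proof -
    have "orbit (BijGroup (grid k l)\<lparr>carrier := groupHV_on_grid k l\<rparr>)
        (subset_image_action (grid k l) r) B = (\<lambda>a. a ` B) ` groupHV_on_grid k l"
      using that by (auto simp: orbit_def subset_image_action_def boards_def)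
    also have "\<dots> = (\<lambda>g. g ` B) ` groupHV k l"
      unfolding groupHV_on_grid_def image_image
      by (rule image_cong[OF refl], rule image_restrict_subset) (use that in \<open>simp add: boards_def\<close>)
    finally show ?thesis
      by (auto simp: orbitHV_def)
  qed
  then show ?thesis
    unfolding orbits_def orbitsHV_def by auto
qed

lemma invariants_restrict_groupHV:
  "invariants (boards k l r) (subset_image_action (grid k l) r) (restrict g (grid k l))
    = {B \<in> boards k l r. g ` B = B}"
  using image_restrict_subset[of _ "grid k l" g]
  by (auto simp: invariants_def subset_image_action_def boards_def)

theorem burnside_groupHV:
  assumes "k \<ge> 1" and "l \<ge> 1"
  shows "4 * card (orbitsHV k l r) = (\<Sum>g\<in>groupHV k l. card {B \<in> boards k l r. g ` B = B})"
proof -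
  let ?G = "BijGroup (grid k l)\<lparr>carrier := groupHV_on_grid k l\<rparr>"
  let ?\<phi> = "subset_image_action (grid k l) r"
  interpret group_action ?G "boards k l r" ?\<phi>
    using group_action.induced_action[OF group_action_subset_image subgroup_groupHV_on_grid]
    by (simp add: boards_def)
  have "finite (boards k l r)"
    by (rule finite_subset[of _ "Pow (grid k l)"]) (auto simp: boards_def grid_def)
  moreover have "finite (groupHV_on_grid k l)"
    by (simp add: groupHV_on_grid_def groupHV_def)
  ultimately have "card (orbitsHV k l r) * 4
      = (\<Sum>a\<in>groupHV_on_grid k l. card (invariants (boards k l r) ?\<phi> a))"
    using burnside card_groupHV_on_grid[OF assms] orbitsHV_eq_orbits by (simp add: order_def)
  also have "\<dots> = (\<Sum>g\<in>groupHV k l. card {B \<in> boards k l r. g ` B = B})"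
    unfolding groupHV_on_grid_def sum.reindex[OF inj_on_restrict_groupHV[OF assms]]
    by (simp add: invariants_restrict_groupHV)
  finally show ?thesis
    by simp
qed

lemma card_boards: "card (boards k l r) = ((2*k+1) * (2*l+1)) choose r"
  by (simp add: boards_def n_subsets card_cartesian_product grid_def)

lemma fixed_boards_eq:
  "{B \<in> boards k l r. g ` B = B} = {B. B \<subseteq> grid k l \<and> card B = r \<and> g ` B = B}"
  by (auto simp: boards_def)

lemma card_fixed_boards_reflH:
  "card {B \<in> boards k l r. reflH k l ` B = B}
    = (\<Sum>t=0..r. ((2*l+1) choose t) * choose_half (2*k*l+k) (r - t))"
proof -
  interpret involution_transversal "grid k l" "reflH k l" "{k} \<times> {0..<2*l+1}" "{0..<k} \<times> {0..<2*l+1}"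
    by unfold_locales (auto simp: grid_def reflH_def)
  have "card ({k} \<times> {0..<2*l+1}) = 2*l+1" and "card ({0..<k} \<times> {0..<2*l+1}) = 2*k*l+k"
    by (simp_all add: card_cartesian_product algebra_simps)
  then show ?thesis
    unfolding fixed_boards_eq card_invariant_subsets by (simp only:)
qed

lemma card_fixed_boards_reflV:
  "card {B \<in> boards k l r. reflV k l ` B = B}
    = (\<Sum>t=0..r. ((2*k+1) choose t) * choose_half (2*k*l+l) (r - t))"
proof -
  interpret involution_transversal "grid k l" "reflV k l" "{0..<2*k+1} \<times> {l}" "{0..<2*k+1} \<times> {0..<l}"
    by unfold_locales (auto simp: grid_def reflV_def)
  have "card ({0..<2*k+1} \<times> {l}) = 2*k+1" and "card ({0..<2*k+1} \<times> {0..<l}) = 2*k*l+l"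
    by (simp_all add: card_cartesian_product algebra_simps)
  then show ?thesis
    unfolding fixed_boards_eq card_invariant_subsets by (simp only:)
qed

lemma card_fixed_boards_rotation:
  "card {B \<in> boards k l r. (reflH k l \<circ> reflV k l) ` B = B} = (2*k*l+k+l) choose (r div 2)"
proof -
  define A where "A = {0..<k} \<times> {0..<2*l+1} \<union> {k} \<times> {0..<l}"
  interpret involution_transversal "grid k l" "reflH k l \<circ> reflV k l" "{(k, l)}" A
    by unfold_locales (auto simp: grid_def reflH_def reflV_def A_def)
  have "card A = 2*k*l+k+l"
    unfolding A_def by (subst card_Un_disjoint) (auto simp: card_cartesian_product algebra_simps)
  moreover have "card {(k, l)} = 1"
    by simp
  ultimately show ?thesis
    unfolding fixed_boards_eq card_invariant_subsets by (simp only: sum_choose_one_choose_half)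
qed

theorem proposition5p4:
  fixes k l r :: nat
  assumes "k \<ge> 1" and "l \<ge> 1" and "k \<noteq> l"
    and "1 \<le> r" and "r \<le> (2*k+1)*(2*l+1)"
  shows "real (card (orbitsHV k l r)) =
    (1/4) * ( real (((2*k+1)*(2*l+1)) choose r)
            + real ((2*k*l+k+l) choose (r div 2))
            + (\<Sum>t=0..r. real ((2*k+1) choose t) * real (choose_half (2*k*l+l) (r - t)))
            + (\<Sum>t=0..r. real ((2*l+1) choose t) * real (choose_half (2*k*l+k) (r - t))))"
proof -
  have "4 * card (orbitsHV k l r) = (\<Sum>g\<in>groupHV k l. card {B \<in> boards k l r. g ` B = B})"
    using assms(1,2) by (rule burnside_groupHV)
  also have "\<dots> = (((2*k+1) * (2*l+1)) choose r)
      + (\<Sum>t=0..r. ((2*l+1) choose t) * choose_half (2*k*l+k) (r - t))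
      + (\<Sum>t=0..r. ((2*k+1) choose t) * choose_half (2*k*l+l) (r - t))
      + ((2*k*l+k+l) choose (r div 2))"
    using assms(1,2)
    by (simp only: sum_groupHV image_id id_apply simp_thms Collect_mem_eq card_boards
        card_fixed_boards_reflH card_fixed_boards_reflV card_fixed_boards_rotation)
  finally show ?thesis
    by (auto dest: arg_cong[where f = real] simp: of_nat_sum)
qed

end
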